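(* Let $(M,S)$ be a covered map with $\Delta(M,S)=(M,(I,O))$. Then $\Delta(M^*,\bar S)=(M^*,(O,I))$, where $\bar S=H\setminus S$; that is, the oriented map associated with the dual covered map is the dual oriented map.
   Context: Permutations compose right to left. A map is $M=(H,\sigma,\alpha)$ with $H$ finite, $\alpha$ a fixed-point-free involution, $\sigma$ a permutation, $\langle\sigma,\alpha\rangle$ transitive, root $r\in H$; $\phi=\sigma\alpha$. The dual map is $M^*=(H,\phi,\alpha)$ with the same root. For $S\subseteq H$, $\pi_{|S}$ is obtained from the cycles of $\pi$ by erasing elements not in $S$. A covered map is $(M,S)$ with $S$ stable by $\alpha$ and $(S,\sigma_{|S},\alpha_{|S})$ a connecting unicellular map ($\sigma_{|S},\alpha_{|S}$ transitive on $S$, $S$ meets every cycle of $\sigma$ — $S=\emptyset$ allowed if $\sigma$ has one cycle — and $\sigma_{|S}\alpha_{|S}$ cyclic); its dual is $(M^*,\bar S)$, which is again a covered map. For a covered map $(M,S)$ the motion function $\theta(h)=\sigma\alpha(h)$ ($h\in S$), $\theta(h)=\sigma(h)$ ($h\notin S$) is cyclic, and the appearance order is $r\prec_S\theta(r)\prec_S\cdots\prec_S\theta^{|H|-1}(r)$. $\Delta(M,S)=(M,(I,O))$ with $I=\{h\in S:\alpha(h)\prec_S h\}\cup\{h\notin S:h\prec_S\alpha(h)\}$, $O=H\setminus I$ (computed for $(M^*,\bar S)$ with the motion function and appearance order of $(M^*,\bar S)$). *)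

theory Defs
  imports "HOL-Combinatorics.Permutations"
begin

text \<open>Permutations are functions on 'a that permute a finite set H (identity outside H).
  Composition is right to left: (f \<circ> g) h = f (g h).\<close>

text \<open>Restriction of a permutation to a subset S: erase elements outside S from the cycles,
  i.e. send h in S to the first element of S after h on its cycle.\<close>
definition restr :: "('a \<Rightarrow> 'a) \<Rightarrow> 'a set \<Rightarrow> 'a \<Rightarrow> 'a" where
  "restr \<pi> S h = (if h \<in> S then (\<pi> ^^ (LEAST k. 0 < k \<and> (\<pi> ^^ k) h \<in> S)) h else h)"

definition cyclic_on :: "('a \<Rightarrow> 'a) \<Rightarrow> 'a set \<Rightarrow> bool" where
  "cyclic_on \<pi> A \<longleftrightarrow> (\<forall>x\<in>A. \<forall>y\<in>A. \<exists>k. (\<pi> ^^ k) x = y)"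

text \<open>The group generated by \<sigma> and \<alpha> acts transitively on A
  (for permutations of a finite set, reachability by forward steps suffices).\<close>
definition transitive_on :: "('a \<Rightarrow> 'a) \<Rightarrow> ('a \<Rightarrow> 'a) \<Rightarrow> 'a set \<Rightarrow> bool" where
  "transitive_on \<sigma> \<alpha> A \<longleftrightarrow>
     (\<forall>x\<in>A. \<forall>y\<in>A. (x, y) \<in> ({(h, \<sigma> h) | h. h \<in> A} \<union> {(h, \<alpha> h) | h. h \<in> A})\<^sup>*)"

definition is_map :: "'a set \<Rightarrow> ('a \<Rightarrow> 'a) \<Rightarrow> ('a \<Rightarrow> 'a) \<Rightarrow> 'a \<Rightarrow> bool" where
  "is_map H \<sigma> \<alpha> r \<longleftrightarrow>
     finite H \<and> \<sigma> permutes H \<and> \<alpha> permutes H \<and>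
     (\<forall>h\<in>H. \<alpha> (\<alpha> h) = h \<and> \<alpha> h \<noteq> h) \<and>
     transitive_on \<sigma> \<alpha> H \<and> r \<in> H"

definition connecting_unicellular :: "'a set \<Rightarrow> ('a \<Rightarrow> 'a) \<Rightarrow> ('a \<Rightarrow> 'a) \<Rightarrow> 'a set \<Rightarrow> bool" where
  "connecting_unicellular H \<sigma> \<alpha> S \<longleftrightarrow>
     transitive_on (restr \<sigma> S) (restr \<alpha> S) S \<and>
     (if S = {} then cyclic_on \<sigma> H else (\<forall>h\<in>H. \<exists>k. (\<sigma> ^^ k) h \<in> S)) \<and>
     cyclic_on (restr \<sigma> S \<circ> restr \<alpha> S) S"

definition covered_map :: "'a set \<Rightarrow> ('a \<Rightarrow> 'a) \<Rightarrow> ('a \<Rightarrow> 'a) \<Rightarrow> 'a \<Rightarrow> 'a set \<Rightarrow> bool" where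
  "covered_map H \<sigma> \<alpha> r S \<longleftrightarrow>
     is_map H \<sigma> \<alpha> r \<and> S \<subseteq> H \<and> \<alpha> ` S \<subseteq> S \<and> connecting_unicellular H \<sigma> \<alpha> S"

definition motion :: "('a \<Rightarrow> 'a) \<Rightarrow> ('a \<Rightarrow> 'a) \<Rightarrow> 'a set \<Rightarrow> 'a \<Rightarrow> 'a" where
  "motion \<sigma> \<alpha> S h = (if h \<in> S then \<sigma> (\<alpha> h) else \<sigma> h)"

definition appear_pos :: "('a \<Rightarrow> 'a) \<Rightarrow> ('a \<Rightarrow> 'a) \<Rightarrow> 'a \<Rightarrow> 'a set \<Rightarrow> 'a \<Rightarrow> nat" where
  "appear_pos \<sigma> \<alpha> r S h = (LEAST k. (motion \<sigma> \<alpha> S ^^ k) r = h)"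

definition appear_less :: "('a \<Rightarrow> 'a) \<Rightarrow> ('a \<Rightarrow> 'a) \<Rightarrow> 'a \<Rightarrow> 'a set \<Rightarrow> 'a \<Rightarrow> 'a \<Rightarrow> bool" where
  "appear_less \<sigma> \<alpha> r S h h' \<longleftrightarrow> appear_pos \<sigma> \<alpha> r S h < appear_pos \<sigma> \<alpha> r S h'"

definition Delta :: "'a set \<Rightarrow> ('a \<Rightarrow> 'a) \<Rightarrow> ('a \<Rightarrow> 'a) \<Rightarrow> 'a \<Rightarrow> 'a set \<Rightarrow> 'a set \<times> 'a set" where
  "Delta H \<sigma> \<alpha> r S =
     (let I = {h \<in> S. appear_less \<sigma> \<alpha> r S (\<alpha> h) h} \<union>
              {h \<in> H - S. appear_less \<sigma> \<alpha> r S h (\<alpha> h)}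
      in (I, H - I))"

end

theory Submission
  imports Defs
begin

text \<open>The motion function of the dual covered map \<open>(M\<^sup>*, H - S)\<close> coincides with that of
  \<open>(M, S)\<close>: on \<open>H - S\<close> it is \<open>\<phi> \<alpha> = \<sigma>\<close>, on \<open>S\<close> it is \<open>\<phi> = \<sigma> \<alpha>\<close>. Hence both covered maps have the
  same appearance order, and the rule defining \<open>I\<close> with \<open>S\<close> and \<open>H - S\<close> exchanged selects exactly
  the complement \<open>O\<close>. The only real work is to see that the motion function visits every
  half-edge from the root, so that the appearance order is a linear order in which \<open>h\<close> and
  \<open>\<alpha> h\<close> are always comparable: the motion function walks along \<open>\<sigma>\<close> outside \<open>S\<close>, so it reaches
  \<open>S\<close>, and it realises each step of the face permutation \<open>\<sigma>\<^sub>|\<^sub>S \<alpha>\<^sub>|\<^sub>S\<close>, which is cyclic on \<open>S\<close>;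
  the visited set then contains \<open>S\<close> and is closed under \<open>\<sigma>\<close>, hence is all of \<open>H\<close>.\<close>

definition reaches :: "('a \<Rightarrow> 'a) \<Rightarrow> 'a \<Rightarrow> 'a \<Rightarrow> bool" where
  "reaches f x y \<longleftrightarrow> (\<exists>n. (f ^^ n) x = y)"

lemma reaches_refl [simp]: "reaches f x x"
  unfolding reaches_def by (metis funpow_0)

lemma reaches_funpow: "reaches f x ((f ^^ n) x)"
  unfolding reaches_def by blast

lemma reaches_step: "reaches f x (f x)"
  using reaches_funpow[of f x 1] by simp

lemma reaches_trans: "reaches f x y \<Longrightarrow> reaches f y z \<Longrightarrow> reaches f x z"
  unfolding reaches_def by (metis comp_apply funpow_add)

lemma reaches_invariant:
  assumes "\<And>x. P x \<Longrightarrow> P (f x)" "P x" "reaches f x y"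
  shows "P y"
proof -
  have "P ((f ^^ n) x)" for n
    by (induction n) (simp_all add: assms(1,2))
  then show ?thesis using assms(3) unfolding reaches_def by blast
qed

lemma permutation_reaches_sym:
  assumes "permutation p" "reaches p x y"
  shows "reaches p y x"
proof -
  obtain n where y: "(p ^^ n) x = y" using assms(2) unfolding reaches_def by blast
  obtain m where "m > 0" "(p ^^ m) x = x" using permutation_self[OF assms(1)] by metis
  then have "(p ^^ (m * n)) x = x"
    unfolding funpow_mult[symmetric] by (induction n) simp_all
  moreover have "m * n = (m * n - n) + n" using \<open>m > 0\<close> by simp
  ultimately have "(p ^^ (m * n - n)) y = x"
    using y by (metis comp_apply funpow_add)
  then show ?thesis unfolding reaches_def by blast
qed

lemma motion_funpow_outside:
  assumes "\<forall>j<k. (\<sigma> ^^ j) y \<notin> S"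
  shows "(motion \<sigma> \<alpha> S ^^ k) y = (\<sigma> ^^ k) y"
  using assms by (induction k) (simp_all add: motion_def)

lemma motion_reaches_first_hit:
  assumes "(\<sigma> ^^ k) x \<in> S"
  shows "reaches (motion \<sigma> \<alpha> S) x ((\<sigma> ^^ (LEAST k. (\<sigma> ^^ k) x \<in> S)) x)"
proof -
  have "\<forall>j<(LEAST k. (\<sigma> ^^ k) x \<in> S). (\<sigma> ^^ j) x \<notin> S"
    using not_less_Least by blast
  from motion_funpow_outside[OF this] show ?thesis
    by (metis reaches_funpow)
qed

lemma restr_eq_first_hit:
  assumes "(\<sigma> ^^ k) (\<sigma> y) \<in> S" "y \<in> S"
  shows "restr \<sigma> S y = (\<sigma> ^^ (LEAST k. (\<sigma> ^^ k) (\<sigma> y) \<in> S)) (\<sigma> y)"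
proof -
  have "(LEAST k. 0 < k \<and> (\<sigma> ^^ k) y \<in> S) = Suc (LEAST k. (\<sigma> ^^ k) (\<sigma> y) \<in> S)"
    by (rule Least_Suc2[where n = "Suc k" and m = k]) (use assms(1) in \<open>simp_all add: funpow_swap1\<close>)
  then show ?thesis using assms(2) by (simp add: restr_def funpow_swap1)
qed

lemma restr_stable:
  assumes "\<alpha> ` S \<subseteq> S" "x \<in> S"
  shows "restr \<alpha> S x = \<alpha> x"
proof -
  have "(LEAST k. 0 < k \<and> (\<alpha> ^^ k) x \<in> S) = 1"
    by (rule Least_equality) (use assms in auto)
  then show ?thesis using assms(2) by (simp add: restr_def)
qed

lemma permutation_restr_in:
  assumes "permutation \<sigma>" "y \<in> S"
  shows "restr \<sigma> S y \<in> S"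
proof -
  obtain n where "n > 0" "(\<sigma> ^^ n) y = y" using permutation_self[OF assms(1)] by metis
  then show ?thesis
    using assms(2) LeastI[of "\<lambda>k. 0 < k \<and> (\<sigma> ^^ k) y \<in> S" n] by (simp add: restr_def)
qed

text \<open>On \<open>S\<close> the motion function performs one step of the face permutation of \<open>(S, \<sigma>\<^sub>|\<^sub>S, \<alpha>\<^sub>|\<^sub>S)\<close>
  by walking along \<open>\<sigma>\<close> from \<open>\<sigma> (\<alpha> x)\<close> until it re-enters \<open>S\<close>.\<close>

lemma motion_reaches_face_step:
  assumes "permutation \<sigma>" "\<alpha> ` S \<subseteq> S" "x \<in> S"
  shows "reaches (motion \<sigma> \<alpha> S) x ((restr \<sigma> S \<circ> restr \<alpha> S) x)"
proof -
  let ?\<theta> = "motion \<sigma> \<alpha> S" and ?y = "\<alpha> x"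
  have yS: "?y \<in> S" using assms(2,3) by blast
  obtain n where "n > 0" "(\<sigma> ^^ n) ?y = ?y" using permutation_self[OF assms(1)] by metis
  then have hit: "(\<sigma> ^^ (n - 1)) (\<sigma> ?y) \<in> S"
    using yS by (cases n) (simp_all add: funpow_swap1)
  have "reaches ?\<theta> x (\<sigma> ?y)"
    using reaches_step[of ?\<theta> x] assms(3) by (simp add: motion_def)
  moreover have "reaches ?\<theta> (\<sigma> ?y) (restr \<sigma> S ?y)"
    unfolding restr_eq_first_hit[OF hit yS] by (rule motion_reaches_first_hit[OF hit])
  ultimately show ?thesis
    using restr_stable[OF assms(2,3)] by (simp add: reaches_trans)
qed

lemma motion_reaches_face_orbit:
  assumes "permutation \<sigma>" "\<alpha> ` S \<subseteq> S" "s \<in> S" "reaches (restr \<sigma> S \<circ> restr \<alpha> S) s x"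
  shows "x \<in> S \<and> reaches (motion \<sigma> \<alpha> S) s x"
proof (rule reaches_invariant[OF _ _ assms(4)])
  fix y assume "y \<in> S \<and> reaches (motion \<sigma> \<alpha> S) s y"
  then show "(restr \<sigma> S \<circ> restr \<alpha> S) y \<in> S \<and>
      reaches (motion \<sigma> \<alpha> S) s ((restr \<sigma> S \<circ> restr \<alpha> S) y)"
    using permutation_restr_in[OF assms(1)] restr_stable[OF assms(2)] assms(2)
      motion_reaches_face_step[OF assms(1,2)] reaches_trans
    by (metis comp_apply image_subset_iff)
qed (simp add: assms(3))

lemma covered_map_motion_reaches_all:
  assumes "covered_map H \<sigma> \<alpha> r S" "h \<in> H"
  shows "reaches (motion \<sigma> \<alpha> S) r h"
proof -
  let ?\<theta> = "motion \<sigma> \<alpha> S" and ?\<rho> = "restr \<sigma> S \<circ> restr \<alpha> S"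
  have perm: "permutation \<sigma>" and rH: "r \<in> H" and SH: "S \<subseteq> H" and aS: "\<alpha> ` S \<subseteq> S"
    and inv: "\<forall>h\<in>H. \<alpha> (\<alpha> h) = h"
    and cov: "if S = {} then cyclic_on \<sigma> H else (\<forall>h\<in>H. \<exists>k. (\<sigma> ^^ k) h \<in> S)"
    and face: "cyclic_on ?\<rho> S"
    using assms(1) permutation_permutes
    unfolding covered_map_def is_map_def connecting_unicellular_def by auto
  have S_reached: "reaches ?\<theta> r s" if s: "s \<in> S" for s
  proof -
    obtain k where "(\<sigma> ^^ k) r \<in> S" using cov rH s by (auto split: if_splits)
    then obtain s0 where "s0 \<in> S" "reaches ?\<theta> r s0"
      using motion_reaches_first_hit LeastI by metis
    moreover obtain n where "(?\<rho> ^^ n) s0 = s" using face \<open>s0 \<in> S\<close> s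
      unfolding cyclic_on_def by blast
    ultimately show ?thesis
      using motion_reaches_face_orbit[OF perm aS] reaches_funpow reaches_trans by metis
  qed
  have \<sigma>_closed: "reaches ?\<theta> r (\<sigma> x)" if "reaches ?\<theta> r x" for x
  proof (cases "x \<in> S")
    case True
    then have "?\<theta> (\<alpha> x) = \<sigma> x" using aS SH inv by (auto simp: motion_def)
    then show ?thesis using True aS S_reached reaches_step reaches_trans
      by (metis image_subset_iff)
  next
    case False
    then show ?thesis using that reaches_step reaches_trans
      by (metis motion_def)
  qed
  obtain x where x: "reaches ?\<theta> r x" "reaches \<sigma> x h"
  proof (cases "S = {}")
    case True
    then show ?thesis
      using that[OF reaches_refl] cov rH assms(2) unfolding cyclic_on_def reaches_def by auto
  next
    case False
    then obtain k where "(\<sigma> ^^ k) h \<in> S" using cov assms(2) by auto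
    then show ?thesis
      using that S_reached permutation_reaches_sym[OF perm reaches_funpow] by blast
  qed
  show ?thesis by (rule reaches_invariant[OF \<sigma>_closed x])
qed

lemma appear_pos_funpow:
  assumes "reaches (motion \<sigma> \<alpha> S) r h"
  shows "(motion \<sigma> \<alpha> S ^^ appear_pos \<sigma> \<alpha> r S h) r = h"
proof -
  obtain n where "(motion \<sigma> \<alpha> S ^^ n) r = h" using assms unfolding reaches_def by blast
  then show ?thesis unfolding appear_pos_def by (rule LeastI)
qed

lemma motion_dual:
  assumes "\<alpha> permutes H" "\<forall>h\<in>H. \<alpha> (\<alpha> h) = h" "S \<subseteq> H"
  shows "motion (\<sigma> \<circ> \<alpha>) \<alpha> (H - S) = motion \<sigma> \<alpha> S"
proof
  fix h
  show "motion (\<sigma> \<circ> \<alpha>) \<alpha> (H - S) h = motion \<sigma> \<alpha> S h"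
  proof (cases "h \<in> H")
    case True
    then show ?thesis using assms(2) by (simp add: motion_def)
  next
    case False
    then have "\<alpha> h = h" "h \<notin> S" using permutes_not_in[OF assms(1)] assms(3) by auto
    then show ?thesis using False by (simp add: motion_def)
  qed
qed

theorem mainTheorem12:
  fixes H :: "'a set" and \<sigma> \<alpha> :: "'a \<Rightarrow> 'a" and r :: 'a and S Iset Oset :: "'a set"
  assumes "covered_map H \<sigma> \<alpha> r S"
    and "Delta H \<sigma> \<alpha> r S = (Iset, Oset)"
  shows "Delta H (\<sigma> \<circ> \<alpha>) \<alpha> r (H - S) = (Oset, Iset)"
proof -
  let ?less = "appear_less \<sigma> \<alpha> r S"
  have ap: "\<alpha> permutes H" and inv: "\<forall>h\<in>H. \<alpha> (\<alpha> h) = h \<and> \<alpha> h \<noteq> h" and SH: "S \<subseteq> H"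
    using assms(1) unfolding covered_map_def is_map_def by auto
  have "motion (\<sigma> \<circ> \<alpha>) \<alpha> (H - S) = motion \<sigma> \<alpha> S"
    using motion_dual ap inv SH by blast
  then have dual_less: "appear_less (\<sigma> \<circ> \<alpha>) \<alpha> r (H - S) = ?less"
    unfolding appear_less_def appear_pos_def by simp
  have "appear_pos \<sigma> \<alpha> r S (\<alpha> h) \<noteq> appear_pos \<sigma> \<alpha> r S h" if "h \<in> H" for h
    using that inv permutes_in_image[OF ap]
      appear_pos_funpow[OF covered_map_motion_reaches_all[OF assms(1)]] by metis
  then have total: "?less (\<alpha> h) h \<longleftrightarrow> \<not> ?less h (\<alpha> h)" if "h \<in> H" for h
    using that unfolding appear_less_def by fastforce
  have I: "Iset = {h \<in> S. ?less (\<alpha> h) h} \<union> {h \<in> H - S. ?less h (\<alpha> h)}"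
    and O: "Oset = H - Iset"
    using assms(2) unfolding Delta_def Let_def by auto
  have "{h \<in> H - S. ?less (\<alpha> h) h} \<union> {h \<in> H - (H - S). ?less h (\<alpha> h)} = Oset"
  proof (rule set_eqI)
    fix h
    show "h \<in> {h \<in> H - S. ?less (\<alpha> h) h} \<union> {h \<in> H - (H - S). ?less h (\<alpha> h)} \<longleftrightarrow> h \<in> Oset"
      unfolding O I using total[of h] SH by (cases "h \<in> H") auto
  qed
  moreover have "H - Oset = Iset" unfolding O I using SH by blast
  ultimately show ?thesis unfolding Delta_def Let_def dual_less by simp
qed

end
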